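(* Let $B\in\mathbb{R}^{n\times d}$ with $\|B\|=R\in(0,\infty)$, $g^*:\mathbb{R}^n\to\mathbb{R}\cup\{+\infty\}$ proper, lower semicontinuous and $\gamma$-strongly convex ($\gamma\ge0$), $\ell:\mathbb{R}^d\to\mathbb{R}\cup\{+\infty\}$ proper, lower semicontinuous and $\sigma$-strongly convex ($\sigma\ge0$). For the PDA$^2$ algorithm in the context, for all $(u,v)\in\mathcal{X}\times\mathcal{Y}$ and $k\ge1$, $$\psi_k(y_k)\le A_kg^*(v)+\frac12\|v-y_0\|^2-\frac{1+\gamma A_k}{2}\|v-y_k\|^2,\qquad \phi_k(x_k)\le A_k\ell(u)+\frac12\|u-x_0\|^2-\frac{1+\sigma A_k}{2}\|u-x_k\|^2.$$
   Context: Norms are Euclidean; $\sigma$-strong convexity of $f$ means $f((1-\alpha)x+\alpha\hat x)\le(1-\alpha)f(x)+\alpha f(\hat x)-\frac\sigma2\alpha(1-\alpha)\|\hat x-x\|^2$ for all $x,\hat x$, $\alpha\in(0,1)$. $\mathcal{X}=\mathrm{dom}(\ell)$, $\mathcal{Y}=\mathrm{dom}(g^* )$. PDA$^2$ algorithm: given $(x_0,y_0),(u,v)\in\mathcal{X}\times\mathcal{Y}$, set $a_0=A_0=0$, $x_{-1}=x_0$, $\phi_0(x)=\frac12\|x-x_0\|^2$, $\psi_0(y)=\frac12\|y-y_0\|^2$. For $k=1,2,\dots$: $a_k=\frac{\sqrt{(1+\sigma A_{k-1})(1+\gamma A_{k-1})}}{\sqrt2R}$, $A_k=A_{k-1}+a_k$;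 $\bar x_{k-1}=x_{k-1}+\frac{a_{k-1}}{a_k}(x_{k-1}-x_{k-2})$; $\psi_k(y)=\psi_{k-1}(y)+a_k(\langle-B\bar x_{k-1},y-v\rangle+g^*(y))$, $y_k=\arg\min_{y}\psi_k(y)$; $\phi_k(x)=\phi_{k-1}(x)+a_k(\langle x-u,B^Ty_k\rangle+\ell(x))$, $x_k=\arg\min_x\phi_k(x)$. *)

theory Defs
  imports "HOL-Analysis.Analysis" "HOL-Library.Extended_Real"
begin

definition proper_fun :: "('a \<Rightarrow> ereal) \<Rightarrow> bool" where
  "proper_fun f \<longleftrightarrow> (\<forall>x. f x \<noteq> -\<infinity>) \<and> (\<exists>x. f x \<noteq> \<infinity>)"

definition lsc_fun :: "('a::topological_space \<Rightarrow> ereal) \<Rightarrow> bool" where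
  "lsc_fun f \<longleftrightarrow> (\<forall>x. f x \<le> Liminf (at x) f)"

definition strongly_convex_fun :: "real \<Rightarrow> ('a::real_normed_vector \<Rightarrow> ereal) \<Rightarrow> bool" where
  "strongly_convex_fun \<sigma> f \<longleftrightarrow>
     (\<forall>x xh \<alpha>. 0 < \<alpha> \<and> \<alpha> < 1 \<longrightarrow>
        f ((1 - \<alpha>) *\<^sub>R x + \<alpha> *\<^sub>R xh)
          \<le> ereal (1 - \<alpha>) * f x + ereal \<alpha> * f xh
             - ereal (\<sigma> / 2 * \<alpha> * (1 - \<alpha>) * (norm (xh - x))\<^sup>2))"

definition edom :: "('a \<Rightarrow> ereal) \<Rightarrow> 'a set" where
  "edom f = {x. f x < \<infinity>}"

fun pdaA :: "real \<Rightarrow> real \<Rightarrow> real \<Rightarrow> nat \<Rightarrow> real" where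
  "pdaA \<sigma> \<gamma> R 0 = 0"
| "pdaA \<sigma> \<gamma> R (Suc k) = pdaA \<sigma> \<gamma> R k
     + sqrt ((1 + \<sigma> * pdaA \<sigma> \<gamma> R k) * (1 + \<gamma> * pdaA \<sigma> \<gamma> R k)) / (sqrt 2 * R)"

fun pdaa :: "real \<Rightarrow> real \<Rightarrow> real \<Rightarrow> nat \<Rightarrow> real" where
  "pdaa \<sigma> \<gamma> R 0 = 0"
| "pdaa \<sigma> \<gamma> R (Suc k) =
     sqrt ((1 + \<sigma> * pdaA \<sigma> \<gamma> R k) * (1 + \<gamma> * pdaA \<sigma> \<gamma> R k)) / (sqrt 2 * R)"

definition pda_xbar :: "(nat \<Rightarrow> real) \<Rightarrow> (nat \<Rightarrow> 'a::real_vector) \<Rightarrow> nat \<Rightarrow> 'a" where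
  "pda_xbar a x j = x j + (a j / a (Suc j)) *\<^sub>R (x j - (if j = 0 then x 0 else x (j - 1)))"

fun pda_psi :: "real^'d^'n \<Rightarrow> (real^'n \<Rightarrow> ereal) \<Rightarrow> (nat \<Rightarrow> real) \<Rightarrow> (nat \<Rightarrow> real^'d)
                 \<Rightarrow> real^'n \<Rightarrow> real^'n \<Rightarrow> nat \<Rightarrow> real^'n \<Rightarrow> ereal" where
  "pda_psi B gs a x y0 v 0 y = ereal ((norm (y - y0))\<^sup>2 / 2)"
| "pda_psi B gs a x y0 v (Suc k) y = pda_psi B gs a x y0 v k y
     + ereal (a (Suc k)) * (ereal (inner (- (B *v pda_xbar a x k)) (y - v)) + gs y)"

fun pda_phi :: "real^'d^'n \<Rightarrow> (real^'d \<Rightarrow> ereal) \<Rightarrow> (nat \<Rightarrow> real) \<Rightarrow> (nat \<Rightarrow> real^'n)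
                 \<Rightarrow> real^'d \<Rightarrow> real^'d \<Rightarrow> nat \<Rightarrow> real^'d \<Rightarrow> ereal" where
  "pda_phi B l a y x0 u 0 x = ereal ((norm (x - x0))\<^sup>2 / 2)"
| "pda_phi B l a y x0 u (Suc k) x = pda_phi B l a y x0 u k x
     + ereal (a (Suc k)) * (ereal (inner (x - u) (transpose B *v y (Suc k))) + l x)"

end

theory Submission
  imports Defs
begin

text \<open>Unrolling the recursion, \<open>\<psi>\<^sub>k(y) = \<parallel>y - y\<^sub>0\<parallel>\<^sup>2/2 + \<langle>c, y - v\<rangle> + A\<^sub>k g\<^sup>*(y)\<close> for some
  vector \<open>c\<close>: the linear terms collect into one and the weights of \<open>g\<^sup>*\<close> add up to \<open>A\<^sub>k\<close>.
  Hence \<open>\<psi>\<^sub>k\<close> is \<open>(1 + \<gamma>A\<^sub>k)\<close>-strongly convex, and a \<open>\<mu>\<close>-strongly convex function exceeds its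
  minimum value by at least \<open>\<mu>\<parallel>v - y\<^sub>k\<parallel>\<^sup>2/2\<close> at \<open>v\<close>, where the linear term vanishes.
  The same argument applies to \<open>\<phi>\<^sub>k\<close>.\<close>

lemma strongly_convex_fun_quadratic:
  fixes y0 c v :: "'a::real_inner"
  shows "strongly_convex_fun 1 (\<lambda>y. ereal ((norm (y - y0))\<^sup>2 / 2 + inner c (y - v)))"
  unfolding strongly_convex_fun_def
proof (intro allI impI)
  fix x xh :: 'a and \<alpha> :: real
  have "(norm ((1 - \<alpha>) *\<^sub>R x + \<alpha> *\<^sub>R xh - y0))\<^sup>2
      = (1 - \<alpha>) * (norm (x - y0))\<^sup>2 + \<alpha> * (norm (xh - y0))\<^sup>2 - \<alpha> * (1 - \<alpha>) * (norm (xh - x))\<^sup>2"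
  proof -
    have split: "(1 - \<alpha>) *\<^sub>R x + \<alpha> *\<^sub>R xh - y0 = (1 - \<alpha>) *\<^sub>R (x - y0) + \<alpha> *\<^sub>R (xh - y0)"
      and diff: "xh - x = (xh - y0) - (x - y0)"
      by (simp_all add: algebra_simps)
    show ?thesis
      unfolding split diff power2_norm_eq_inner
      by (simp add: inner_add_left inner_add_right inner_diff_left inner_diff_right
          inner_commute algebra_simps power2_eq_square)
  qed
  moreover have "inner c ((1 - \<alpha>) *\<^sub>R x + \<alpha> *\<^sub>R xh - v)
      = (1 - \<alpha>) * inner c (x - v) + \<alpha> * inner c (xh - v)"
    by (simp add: inner_diff_right inner_add_right algebra_simps)
  ultimately show "ereal ((norm ((1 - \<alpha>) *\<^sub>R x + \<alpha> *\<^sub>R xh - y0))\<^sup>2 / 2 + inner c ((1 - \<alpha>) *\<^sub>R x + \<alpha> *\<^sub>R xh - v))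
      \<le> ereal (1 - \<alpha>) * ereal ((norm (x - y0))\<^sup>2 / 2 + inner c (x - v))
         + ereal \<alpha> * ereal ((norm (xh - y0))\<^sup>2 / 2 + inner c (xh - v))
         - ereal (1 / 2 * \<alpha> * (1 - \<alpha>) * (norm (xh - x))\<^sup>2)"
    by (simp add: field_simps)
qed

lemma strongly_convex_fun_cmult:
  fixes G :: "'a::real_normed_vector \<Rightarrow> ereal"
  assumes sc: "strongly_convex_fun \<gamma> G" and ninf: "\<And>y. G y \<noteq> -\<infinity>" and A: "0 \<le> A"
  shows "strongly_convex_fun (A * \<gamma>) (\<lambda>y. ereal A * G y)"
  unfolding strongly_convex_fun_def
proof (intro allI impI)
  fix x xh :: 'a and \<alpha> :: real
  assume \<alpha>: "0 < \<alpha> \<and> \<alpha> < 1"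
  have "ereal A * G ((1 - \<alpha>) *\<^sub>R x + \<alpha> *\<^sub>R xh)
      \<le> ereal A * (ereal (1 - \<alpha>) * G x + ereal \<alpha> * G xh - ereal (\<gamma> / 2 * \<alpha> * (1 - \<alpha>) * (norm (xh - x))\<^sup>2))"
    using sc \<alpha> A unfolding strongly_convex_fun_def by (intro ereal_mult_left_mono) auto
  also have "\<dots> = ereal (1 - \<alpha>) * (ereal A * G x) + ereal \<alpha> * (ereal A * G xh)
      - ereal (A * \<gamma> / 2 * \<alpha> * (1 - \<alpha>) * (norm (xh - x))\<^sup>2)"
    using ninf[of x] ninf[of xh] \<alpha> A
    by (cases "G x"; cases "G xh"; cases "A = 0") (auto simp: algebra_simps)
  finally show "ereal A * G ((1 - \<alpha>) *\<^sub>R x + \<alpha> *\<^sub>R xh)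
      \<le> ereal (1 - \<alpha>) * (ereal A * G x) + ereal \<alpha> * (ereal A * G xh)
         - ereal (A * \<gamma> / 2 * \<alpha> * (1 - \<alpha>) * (norm (xh - x))\<^sup>2)" .
qed

lemma strongly_convex_fun_add_real:
  fixes q :: "'a::real_normed_vector \<Rightarrow> real" and G :: "'a \<Rightarrow> ereal"
  assumes q: "strongly_convex_fun \<mu> (\<lambda>y. ereal (q y))" and G: "strongly_convex_fun \<nu> G"
    and ninf: "\<And>y. G y \<noteq> -\<infinity>"
  shows "strongly_convex_fun (\<mu> + \<nu>) (\<lambda>y. ereal (q y) + G y)"
  unfolding strongly_convex_fun_def
proof (intro allI impI)
  fix x xh :: 'a and \<alpha> :: real
  assume \<alpha>: "0 < \<alpha> \<and> \<alpha> < 1"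
  let ?w = "(1 - \<alpha>) *\<^sub>R x + \<alpha> *\<^sub>R xh" and ?d = "(norm (xh - x))\<^sup>2"
  have "ereal (q ?w) + G ?w
      \<le> (ereal (1 - \<alpha>) * ereal (q x) + ereal \<alpha> * ereal (q xh) - ereal (\<mu> / 2 * \<alpha> * (1 - \<alpha>) * ?d))
       + (ereal (1 - \<alpha>) * G x + ereal \<alpha> * G xh - ereal (\<nu> / 2 * \<alpha> * (1 - \<alpha>) * ?d))"
    using q G \<alpha> unfolding strongly_convex_fun_def by (intro add_mono) blast+
  also have "\<dots> = ereal (1 - \<alpha>) * (ereal (q x) + G x) + ereal \<alpha> * (ereal (q xh) + G xh)
      - ereal ((\<mu> + \<nu>) / 2 * \<alpha> * (1 - \<alpha>) * ?d)"
    using ninf[of x] ninf[of xh] \<alpha>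
    by (cases "G x"; cases "G xh") (auto simp: field_simps)
  finally show "ereal (q ?w) + G ?w \<le> ereal (1 - \<alpha>) * (ereal (q x) + G x)
      + ereal \<alpha> * (ereal (q xh) + G xh) - ereal ((\<mu> + \<nu>) / 2 * \<alpha> * (1 - \<alpha>) * ?d)" .
qed

lemma strongly_convex_fun_minimizer_bound:
  fixes F :: "'a::real_normed_vector \<Rightarrow> ereal"
  assumes sc: "strongly_convex_fun \<mu> F" and ninf: "\<And>w. F w \<noteq> -\<infinity>"
    and z_min: "\<And>w. F z \<le> F w"
  shows "F z \<le> F v - ereal (\<mu> / 2 * (norm (v - z))\<^sup>2)"
proof (cases "F v")
  case (real fv)
  obtain fz where fz: "F z = ereal fz"
    using z_min[of v] ninf[of z] real by (cases "F z") auto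
  define d where "d = \<mu> / 2 * (norm (v - z))\<^sup>2"
  have gap: "d * (1 - \<alpha>) \<le> fv - fz" if \<alpha>: "0 < \<alpha>" "\<alpha> < 1" for \<alpha>
  proof -
    have "F z \<le> F ((1 - \<alpha>) *\<^sub>R z + \<alpha> *\<^sub>R v)" by (rule z_min)
    also have "\<dots> \<le> ereal (1 - \<alpha>) * F z + ereal \<alpha> * F v - ereal (\<mu> / 2 * \<alpha> * (1 - \<alpha>) * (norm (v - z))\<^sup>2)"
      using sc \<alpha> unfolding strongly_convex_fun_def by blast
    finally have "\<alpha> * fz \<le> \<alpha> * (fv - d * (1 - \<alpha>))"
      using fz real by (simp add: d_def algebra_simps)
    then show ?thesis using \<alpha> by simp
  qed
  have "((\<lambda>\<alpha>. d * (1 - \<alpha>)) \<longlongrightarrow> d) (at_right 0)"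
    by (auto intro!: tendsto_eq_intros)
  moreover have "eventually (\<lambda>\<alpha>. d * (1 - \<alpha>) \<le> fv - fz) (at_right 0)"
    unfolding eventually_at_right_field by (intro exI[of _ 1]) (auto intro: gap)
  ultimately have "d \<le> fv - fz"
    by (rule tendsto_upperbound) simp
  then show ?thesis using fz real by (simp add: d_def)
qed (use ninf in auto)

lemma linearized_model_eq:
  fixes F :: "nat \<Rightarrow> 'a::real_inner \<Rightarrow> ereal" and G :: "'a \<Rightarrow> ereal"
  assumes F0: "\<And>y. F 0 y = ereal ((norm (y - y0))\<^sup>2 / 2)"
    and FSuc: "\<And>k y. F (Suc k) y = F k y + ereal (a (Suc k)) * (ereal (inner (c k) (y - v)) + G y)"
    and a_nonneg: "\<And>k. 0 \<le> a k" and ninf: "\<And>y. G y \<noteq> -\<infinity>"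
  shows "\<exists>c'. F k = (\<lambda>y. ereal ((norm (y - y0))\<^sup>2 / 2 + inner c' (y - v)) + ereal (\<Sum>j = 1..k. a j) * G y)"
proof (induction k)
  case 0
  show ?case by (intro exI[of _ 0]) (simp add: F0 zero_ereal_def[symmetric])
next
  case (Suc k)
  then obtain c' where IH: "F k = (\<lambda>y. ereal ((norm (y - y0))\<^sup>2 / 2 + inner c' (y - v)) + ereal (\<Sum>j = 1..k. a j) * G y)"
    by blast
  have A_nonneg: "0 \<le> (\<Sum>j = 1..k. a j)" by (simp add: sum_nonneg a_nonneg)
  have "F (Suc k) y = ereal ((norm (y - y0))\<^sup>2 / 2 + inner (c' + a (Suc k) *\<^sub>R c k) (y - v))
      + ereal (\<Sum>j = 1..Suc k. a j) * G y" for y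
    using ninf[of y] A_nonneg a_nonneg[of "Suc k"]
    by (cases "G y") (auto simp: FSuc IH inner_add_left algebra_simps)
  then show ?case by blast
qed

lemma linearized_model_minimizer_bound:
  fixes F :: "nat \<Rightarrow> 'a::real_inner \<Rightarrow> ereal" and G :: "'a \<Rightarrow> ereal"
  assumes F0: "\<And>y. F 0 y = ereal ((norm (y - y0))\<^sup>2 / 2)"
    and FSuc: "\<And>k y. F (Suc k) y = F k y + ereal (a (Suc k)) * (ereal (inner (c k) (y - v)) + G y)"
    and a_nonneg: "\<And>k. 0 \<le> a k" and ninf: "\<And>y. G y \<noteq> -\<infinity>"
    and G_sc: "strongly_convex_fun \<gamma> G"
    and z_min: "\<And>w. F k z \<le> F k w"
  shows "F k z \<le> ereal (\<Sum>j = 1..k. a j) * G v + ereal ((norm (v - y0))\<^sup>2 / 2)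
           - ereal ((1 + \<gamma> * (\<Sum>j = 1..k. a j)) / 2 * (norm (v - z))\<^sup>2)"
proof -
  define A where "A = (\<Sum>j = 1..k. a j)"
  have A_nonneg: "0 \<le> A" by (simp add: A_def sum_nonneg a_nonneg)
  obtain c' where F_eq: "F k = (\<lambda>y. ereal ((norm (y - y0))\<^sup>2 / 2 + inner c' (y - v)) + ereal A * G y)"
    using linearized_model_eq[OF F0 FSuc a_nonneg ninf] unfolding A_def by blast
  have "strongly_convex_fun (1 + A * \<gamma>) (F k)"
    unfolding F_eq
    by (intro strongly_convex_fun_add_real strongly_convex_fun_quadratic strongly_convex_fun_cmult
        G_sc ninf A_nonneg) (use ninf A_nonneg in auto)
  moreover have "\<And>w. F k w \<noteq> -\<infinity>"
    using ninf A_nonneg by (simp add: F_eq)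
  ultimately have "F k z \<le> F k v - ereal ((1 + A * \<gamma>) / 2 * (norm (v - z))\<^sup>2)"
    using z_min by (rule strongly_convex_fun_minimizer_bound)
  then show ?thesis by (simp add: F_eq A_def add.commute mult.commute)
qed

lemma pdaA_eq_sum: "pdaA \<sigma> \<gamma> R k = (\<Sum>j = 1..k. pdaa \<sigma> \<gamma> R j)"
  by (induction k) simp_all

lemma pdaA_nonneg:
  assumes "0 \<le> \<sigma>" "0 \<le> \<gamma>" "0 \<le> R"
  shows "0 \<le> pdaA \<sigma> \<gamma> R k"
  using assms by (induction k) auto

lemma pdaa_nonneg:
  assumes "0 \<le> \<sigma>" "0 \<le> \<gamma>" "0 \<le> R"
  shows "0 \<le> pdaa \<sigma> \<gamma> R k"
  using assms pdaA_nonneg[OF assms] by (cases k) auto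

theorem lemma1:
  fixes B :: "real^'d^'n" and R \<sigma> \<gamma> :: real
    and gs :: "real^'n \<Rightarrow> ereal" and l :: "real^'d \<Rightarrow> ereal"
    and x :: "nat \<Rightarrow> real^'d" and y :: "nat \<Rightarrow> real^'n"
    and u :: "real^'d" and v :: "real^'n"
  assumes normB: "onorm (\<lambda>z. B *v z) = R" and Rpos: "0 < R"
    and gs_proper: "proper_fun gs" and gs_lsc: "lsc_fun gs"
    and gs_sc: "strongly_convex_fun \<gamma> gs" and gamma_nonneg: "0 \<le> \<gamma>"
    and l_proper: "proper_fun l" and l_lsc: "lsc_fun l"
    and l_sc: "strongly_convex_fun \<sigma> l" and sigma_nonneg: "0 \<le> \<sigma>"
    and x0_dom: "x 0 \<in> edom l" and y0_dom: "y 0 \<in> edom gs"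
    and u_dom: "u \<in> edom l" and v_dom: "v \<in> edom gs"
    and y_min: "\<And>k z. k \<ge> 1 \<Longrightarrow>
       pda_psi B gs (pdaa \<sigma> \<gamma> R) x (y 0) v k (y k) \<le> pda_psi B gs (pdaa \<sigma> \<gamma> R) x (y 0) v k z"
    and x_min: "\<And>k z. k \<ge> 1 \<Longrightarrow>
       pda_phi B l (pdaa \<sigma> \<gamma> R) y (x 0) u k (x k) \<le> pda_phi B l (pdaa \<sigma> \<gamma> R) y (x 0) u k z"
    and k1: "k \<ge> 1"
  shows "pda_psi B gs (pdaa \<sigma> \<gamma> R) x (y 0) v k (y k)
           \<le> ereal (pdaA \<sigma> \<gamma> R k) * gs v + ereal ((norm (v - y 0))\<^sup>2 / 2)
              - ereal ((1 + \<gamma> * pdaA \<sigma> \<gamma> R k) / 2 * (norm (v - y k))\<^sup>2)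
       \<and> pda_phi B l (pdaa \<sigma> \<gamma> R) y (x 0) u k (x k)
           \<le> ereal (pdaA \<sigma> \<gamma> R k) * l u + ereal ((norm (u - x 0))\<^sup>2 / 2)
              - ereal ((1 + \<sigma> * pdaA \<sigma> \<gamma> R k) / 2 * (norm (u - x k))\<^sup>2)"
proof -
  \<comment> \<open>Lower semicontinuity, \<open>R = \<parallel>B\<parallel>\<close> and the domain conditions matter only for the existence
      of the minimisers \<open>x\<^sub>k\<close>, \<open>y\<^sub>k\<close>, which are assumed here.\<close>
  have gs_ninf: "\<And>w. gs w \<noteq> -\<infinity>" and l_ninf: "\<And>w. l w \<noteq> -\<infinity>"
    using gs_proper l_proper unfolding proper_fun_def by auto
  have a_nonneg: "\<And>j. 0 \<le> pdaa \<sigma> \<gamma> R j"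
    using sigma_nonneg gamma_nonneg Rpos by (simp add: pdaa_nonneg)
  show ?thesis
    unfolding pdaA_eq_sum
  proof
    show "pda_psi B gs (pdaa \<sigma> \<gamma> R) x (y 0) v k (y k)
        \<le> ereal (\<Sum>j = 1..k. pdaa \<sigma> \<gamma> R j) * gs v + ereal ((norm (v - y 0))\<^sup>2 / 2)
           - ereal ((1 + \<gamma> * (\<Sum>j = 1..k. pdaa \<sigma> \<gamma> R j)) / 2 * (norm (v - y k))\<^sup>2)"
      by (rule linearized_model_minimizer_bound[where F = "pda_psi B gs (pdaa \<sigma> \<gamma> R) x (y 0) v"
            and c = "\<lambda>j. - (B *v pda_xbar (pdaa \<sigma> \<gamma> R) x j)"])
        (use a_nonneg gs_ninf gs_sc y_min k1 in simp_all)
    show "pda_phi B l (pdaa \<sigma> \<gamma> R) y (x 0) u k (x k)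
        \<le> ereal (\<Sum>j = 1..k. pdaa \<sigma> \<gamma> R j) * l u + ereal ((norm (u - x 0))\<^sup>2 / 2)
           - ereal ((1 + \<sigma> * (\<Sum>j = 1..k. pdaa \<sigma> \<gamma> R j)) / 2 * (norm (u - x k))\<^sup>2)"
      by (rule linearized_model_minimizer_bound[where F = "pda_phi B l (pdaa \<sigma> \<gamma> R) y (x 0) u"
            and c = "\<lambda>j. transpose B *v y (Suc j)"])
        (use a_nonneg l_ninf l_sc x_min k1 in \<open>simp_all add: inner_commute\<close>)
  qed
qed

end
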